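(* Let $(X,|\cdot|_X)$ be a Banach space, $T>0$, and let $A\colon D(A)\subset X\to X$ be the infinitesimal generator of a $C_0$-semigroup $\{S(t): t\ge 0\}$ of bounded linear operators on $X$. Let $a,b,k>0$ and let $F,G\colon X^2\to X$ be continuous. Define $N_1,N_2\colon C([0,T];X)^2\to C([0,T];X)$ by \begin{align*} N_1(x,y)(t) &= \frac{1}{a}S(t)\Big[S(T)x(0)-kS(T)y(0)+kb\,y(0) + \int_0^T S(T-s)\big(F(x(s),y(s))-kG(x(s),y(s))\big)\,ds\Big] \\ &\quad+\int_0^t S(t-s)F(x(s),y(s))\,ds,\\ N_2(x,y)(t) &= \frac{1}{kb}S(t)\Big[-S(T)x(0)+kS(T)y(0)+a\,x(0) - \int_0^T S(T-s)\big(F(x(s),y(s))-kG(x(s),y(s))\big)\,ds\Big] \\ &\quad+\int_0^t S(t-s)G(x(s),y(s))\,ds, \end{align*} for $t\in[0,T]$. If $(x,y)\in C([0,T];X)^2$ satisfies $x=N_1(x,y)$ and $y=N_2(x,y)$, then for all $t\in[0,T]$ \[ x(t)=S(t)x(0)+\int_0^t S(t-s)F(x(s),y(s))\,ds,\qquad y(t)=S(t)y(0)+\int_0^t S(t-s)G(x(s),y(s))\,ds, \] and moreover $x(T)-a\,x(0)=k\big(y(T)-b\,y(0)\big)$.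
   Context: Integrals are Bochner/Riemann integrals of continuous $X$-valued functions. The two integral equations say that $x,y$ form a mild solution of the system $x'=Ax+F(x,y)$, $y'=Ay+G(x,y)$ on $[0,T]$. *)

theory Defs
  imports "HOL-Analysis.Analysis"
begin

definition C0_semigroup :: "(real \<Rightarrow> ('a::banach \<Rightarrow>\<^sub>L 'a)) \<Rightarrow> bool" where
  "C0_semigroup S \<longleftrightarrow>
     S 0 = id_blinfun \<and>
     (\<forall>t\<ge>0. \<forall>s\<ge>0. S (t + s) = S t o\<^sub>L S s) \<and>
     (\<forall>x. ((\<lambda>t. blinfun_apply (S t) x) \<longlongrightarrow> x) (at_right 0))"

definition sg_generator ::
  "(real \<Rightarrow> ('a::banach \<Rightarrow>\<^sub>L 'a)) \<Rightarrow> ('a \<Rightarrow> 'a) \<Rightarrow> 'a set \<Rightarrow> bool" where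
  "sg_generator S A D \<longleftrightarrow>
     D = {x. \<exists>l. ((\<lambda>h. (1 / h) *\<^sub>R (blinfun_apply (S h) x - x)) \<longlongrightarrow> l) (at_right 0)} \<and>
     (\<forall>x\<in>D. ((\<lambda>h. (1 / h) *\<^sub>R (blinfun_apply (S h) x - x)) \<longlongrightarrow> A x) (at_right 0))"

definition N1 ::
  "(real \<Rightarrow> ('a::banach \<Rightarrow>\<^sub>L 'a)) \<Rightarrow> ('a \<times> 'a \<Rightarrow> 'a) \<Rightarrow> ('a \<times> 'a \<Rightarrow> 'a) \<Rightarrow>
   real \<Rightarrow> real \<Rightarrow> real \<Rightarrow> real \<Rightarrow> (real \<Rightarrow> 'a) \<Rightarrow> (real \<Rightarrow> 'a) \<Rightarrow> real \<Rightarrow> 'a" where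
  "N1 S F G T a b k x y t =
     (1 / a) *\<^sub>R blinfun_apply (S t)
        (blinfun_apply (S T) (x 0) - k *\<^sub>R blinfun_apply (S T) (y 0) + (k * b) *\<^sub>R y 0
         + integral {0..T} (\<lambda>s. blinfun_apply (S (T - s)) (F (x s, y s) - k *\<^sub>R G (x s, y s))))
     + integral {0..t} (\<lambda>s. blinfun_apply (S (t - s)) (F (x s, y s)))"

definition N2 ::
  "(real \<Rightarrow> ('a::banach \<Rightarrow>\<^sub>L 'a)) \<Rightarrow> ('a \<times> 'a \<Rightarrow> 'a) \<Rightarrow> ('a \<times> 'a \<Rightarrow> 'a) \<Rightarrow>
   real \<Rightarrow> real \<Rightarrow> real \<Rightarrow> real \<Rightarrow> (real \<Rightarrow> 'a) \<Rightarrow> (real \<Rightarrow> 'a) \<Rightarrow> real \<Rightarrow> 'a" where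
  "N2 S F G T a b k x y t =
     (1 / (k * b)) *\<^sub>R blinfun_apply (S t)
        (- blinfun_apply (S T) (x 0) + k *\<^sub>R blinfun_apply (S T) (y 0) + a *\<^sub>R x 0
         - integral {0..T} (\<lambda>s. blinfun_apply (S (T - s)) (F (x s, y s) - k *\<^sub>R G (x s, y s))))
     + integral {0..t} (\<lambda>s. blinfun_apply (S (t - s)) (G (x s, y s)))"

end

theory Submission
  imports Defs
begin

text \<open>The bracket in \<open>N1\<close> does not depend on \<open>t\<close>. Evaluating \<open>x = N1 x y\<close> at \<open>t = 0\<close>,
  where \<open>S 0\<close> is the identity and the convolution vanishes, identifies the bracket with
  \<open>a x(0)\<close>; substituting back gives the mild equation for \<open>x\<close>, and likewise for \<open>y\<close>.
  Evaluating at \<open>t = T\<close> and splitting the integral of \<open>S(T - s)(F - k G)\<close> into the two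
  convolutions then yields the boundary condition. The only analysis needed is that the
  convolution integrands are integrable: \<open>s \<mapsto> S(T - s) w(s)\<close> is continuous because a
  C_0-semigroup is strongly continuous and, by the uniform boundedness principle, bounded on
  compact intervals.\<close>

lemma uniform_boundedness:
  fixes f :: "'i \<Rightarrow> ('a::banach \<Rightarrow>\<^sub>L 'b::real_normed_vector)"
  assumes pointwise_bounded: "\<And>z. \<exists>B. \<forall>i\<in>I. norm (blinfun_apply (f i) z) \<le> B"
  shows "\<exists>M. \<forall>i\<in>I. norm (f i) \<le> M"
proof -
  define E where "E n = {z. \<forall>i\<in>I. norm (blinfun_apply (f i) z) \<le> real n}" for n :: nat
  have closed_E: "closed (E n)" for n
  proof -
    have "E n = (\<Inter>i\<in>I. {z. norm (blinfun_apply (f i) z) \<le> real n})"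
      unfolding E_def by auto
    then show ?thesis
      by (simp add: closed_INT closed_Collect_le continuous_on_norm blinfun.continuous_on)
  qed
  have "\<Union>(range E) = UNIV"
  proof (intro set_eqI iffI)
    fix z :: 'a
    obtain B where "\<forall>i\<in>I. norm (blinfun_apply (f i) z) \<le> B" using pointwise_bounded by blast
    moreover obtain n :: nat where "B \<le> real n" using real_arch_simple by blast
    ultimately have "z \<in> E n" unfolding E_def by force
    then show "z \<in> \<Union>(range E)" by blast
  qed simp
  then obtain n where "interior (E n) \<noteq> {}"
    using Baire_category_alt[of euclidean "range E"]
    by (force simp: completely_metrizable_space_euclidean closed_E)
  then obtain z0 r where r: "r > 0" "ball z0 r \<subseteq> E n"
    using mem_interior by blast
  have "norm (f i) \<le> 4 * real n / r" if i: "i \<in> I" for i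
  proof (rule norm_blinfun_bound)
    show "0 \<le> 4 * real n / r" using r by simp
    fix w :: 'a
    show "norm (blinfun_apply (f i) w) \<le> 4 * real n / r * norm w"
    proof (cases "w = 0")
      case False
      define c where "c = r / (2 * norm w)"
      have c: "c > 0" using r False by (simp add: c_def)
      have "z0 + c *\<^sub>R w \<in> E n" "z0 \<in> E n"
        using r False c by (auto simp: dist_norm c_def intro!: subsetD[OF r(2)])
      then have "norm (blinfun_apply (f i) (z0 + c *\<^sub>R w)) \<le> real n"
        "norm (blinfun_apply (f i) z0) \<le> real n"
        using i unfolding E_def by auto
      then have "c * norm (blinfun_apply (f i) w) \<le> 2 * real n"
        using norm_triangle_ineq4[of "blinfun_apply (f i) (z0 + c *\<^sub>R w)" "blinfun_apply (f i) z0"] c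
        by (simp add: blinfun.add_right blinfun.scaleR_right)
      then show ?thesis
        using r False c by (simp add: c_def field_simps)
    qed simp
  qed
  then show ?thesis by blast
qed

lemma C0_semigroup_continuous_at_0:
  assumes "C0_semigroup S"
  shows "continuous (at 0 within {0..}) (\<lambda>t. blinfun_apply (S t) z)"
  using assms unfolding C0_semigroup_def continuous_within at_within_Ici_at_right by simp

lemma C0_semigroup_bounded_near_0:
  fixes S :: "real \<Rightarrow> ('a::banach \<Rightarrow>\<^sub>L 'a)"
  assumes C0: "C0_semigroup S"
  shows "\<exists>\<delta>>0. \<exists>M. \<forall>t\<in>{0..\<delta>}. norm (S t) \<le> M"
proof (rule ccontr)
  assume unbounded: "\<not> ?thesis"
  have "\<exists>t\<in>{0..inverse (real (Suc n))}. norm (S t) > real n" for n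
    using unbounded by (meson not_le positive_imp_inverse_positive of_nat_0_less_iff zero_less_Suc)
  then obtain t where t: "\<And>n. t n \<in> {0..inverse (real (Suc n))}" "\<And>n. norm (S (t n)) > real n"
    by metis
  have "t \<longlonglongrightarrow> 0"
    using t(1) by (intro tendsto_sandwich[OF _ _ tendsto_const LIMSEQ_inverse_real_of_nat]) auto
  then have "(\<lambda>n. blinfun_apply (S (t n)) z) \<longlonglongrightarrow> z" for z
    using continuous_within_tendsto_compose'[OF C0_semigroup_continuous_at_0[OF C0], of t] t(1) C0
    by (simp add: C0_semigroup_def)
  then have "\<exists>B. \<forall>n\<in>UNIV. norm (blinfun_apply (S (t n)) z) \<le> B" for z
    by (metis Bseq_def convergentI convergent_imp_Bseq)
  then obtain M where "\<forall>n. norm (S (t n)) \<le> M"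
    using uniform_boundedness[of UNIV "\<lambda>n. S (t n)"] by blast
  moreover obtain n :: nat where "M \<le> real n" using real_arch_simple by blast
  ultimately show False using t(2)[of n] by (meson not_le order_trans)
qed

lemma C0_semigroup_bounded_on_interval:
  fixes S :: "real \<Rightarrow> ('a::banach \<Rightarrow>\<^sub>L 'a)"
  assumes C0: "C0_semigroup S"
  shows "\<exists>M. \<forall>t\<in>{0..L}. norm (S t) \<le> M"
proof -
  have S0: "S 0 = id_blinfun" and semigroup: "\<And>t s. t \<ge> 0 \<Longrightarrow> s \<ge> 0 \<Longrightarrow> S (t + s) = S t o\<^sub>L S s"
    using C0 unfolding C0_semigroup_def by auto
  obtain \<delta> M where \<delta>: "\<delta> > 0" and M: "\<forall>t\<in>{0..\<delta>}. norm (S t) \<le> M"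
    using C0_semigroup_bounded_near_0[OF C0] by blast
  define K where "K = max 1 M"
  have K: "K \<ge> 1" "\<forall>t\<in>{0..\<delta>}. norm (S t) \<le> K"
    using M by (auto simp: K_def intro: order_trans)
  have "\<forall>t\<in>{0..real n * \<delta>}. norm (S t) \<le> K ^ Suc n" for n
  proof (induction n)
    case 0
    then show ?case using S0 K by (simp add: order_trans[OF norm_blinfun_id_le])
  next
    case (Suc n)
    show ?case
    proof
      fix t assume t: "t \<in> {0..real (Suc n) * \<delta>}"
      show "norm (S t) \<le> K ^ Suc (Suc n)"
      proof (cases "t \<le> \<delta>")
        case True
        then have "norm (S t) \<le> K" using t K by simp
        also have "\<dots> \<le> K ^ Suc (Suc n)" using power_increasing[of 1 "Suc (Suc n)" K] K by simp
        finally show ?thesis .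
      next
        case False
        then have rest: "t - \<delta> \<in> {0..real n * \<delta>}" using t by (auto simp: distrib_right)
        have "norm (S t) = norm (S \<delta> o\<^sub>L S (t - \<delta>))" using semigroup[of \<delta> "t - \<delta>"] rest \<delta> by simp
        also have "\<dots> \<le> norm (S \<delta>) * norm (S (t - \<delta>))" by (rule norm_blinfun_compose)
        also have "\<dots> \<le> K * K ^ Suc n"
          using K \<delta> Suc rest by (intro mult_mono) auto
        finally show ?thesis by simp
      qed
    qed
  qed
  moreover obtain n :: nat where "L / \<delta> \<le> real n" using real_arch_simple by blast
  then have "L \<le> real n * \<delta>" using \<delta> by (simp add: field_simps)
  ultimately show ?thesis by (meson atLeastAtMost_iff order_trans)
qed

lemma C0_semigroup_strongly_continuous:
  fixes S :: "real \<Rightarrow> ('a::banach \<Rightarrow>\<^sub>L 'a)"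
  assumes C0: "C0_semigroup S"
  shows "continuous_on {0..} (\<lambda>t. blinfun_apply (S t) z)"
  unfolding continuous_on_def
proof
  fix t0 :: real assume "t0 \<in> {0..}"
  then have t0: "t0 \<ge> 0" by simp
  have S0: "S 0 = id_blinfun" and semigroup: "\<And>t s. t \<ge> 0 \<Longrightarrow> s \<ge> 0 \<Longrightarrow> S (t + s) = S t o\<^sub>L S s"
    using C0 unfolding C0_semigroup_def by auto
  define g where "g h = blinfun_apply (S h) z - z" for h
  obtain M where M: "\<forall>t\<in>{0..t0 + 1}. norm (S t) \<le> M"
    using C0_semigroup_bounded_on_interval[OF C0] by blast
  \<comment> \<open>Both one-sided increments are \<open>S(min t t0)\<close> applied to \<open>g \<bar>t - t0\<bar>\<close>.\<close>
  have increment: "norm (blinfun_apply (S t) z - blinfun_apply (S t0) z) \<le> M * norm (g \<bar>t - t0\<bar>)"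
    if t: "t \<ge> 0" "\<bar>t - t0\<bar> < 1" for t
  proof -
    have "norm (blinfun_apply (S t) z - blinfun_apply (S t0) z)
        = norm (blinfun_apply (S (min t t0)) (g \<bar>t - t0\<bar>))"
    proof (cases "t0 \<le> t")
      case True
      then have "S t = S t0 o\<^sub>L S (t - t0)" using semigroup[of t0 "t - t0"] t0 by simp
      then show ?thesis using True by (simp add: g_def blinfun.diff_right)
    next
      case False
      then have "S t0 = S t o\<^sub>L S (t0 - t)" using semigroup[of t "t0 - t"] t by simp
      then show ?thesis using False by (simp add: g_def blinfun.diff_right norm_minus_commute)
    qed
    also have "\<dots> \<le> norm (S (min t t0)) * norm (g \<bar>t - t0\<bar>)"
      by (rule norm_blinfun)
    also have "\<dots> \<le> M * norm (g \<bar>t - t0\<bar>)"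
      using M t t0 by (intro mult_right_mono) auto
    finally show ?thesis .
  qed
  have g_cont: "continuous (at 0 within {0..}) g"
    unfolding g_def using C0_semigroup_continuous_at_0[OF C0] by (intro continuous_diff continuous_const)
  have "((\<lambda>t. \<bar>t - t0\<bar>) \<longlongrightarrow> 0) (at t0 within {0..})"
    using tendsto_rabs[OF tendsto_diff[OF tendsto_ident_at[of t0 "{0..}"] tendsto_const[of t0]]] by simp
  then have "((\<lambda>t. g \<bar>t - t0\<bar>) \<longlongrightarrow> g 0) (at t0 within {0..})"
    by (intro continuous_within_tendsto_compose'[OF g_cont]) simp_all
  then have bound_to_0: "((\<lambda>t. M * norm (g \<bar>t - t0\<bar>)) \<longlongrightarrow> 0) (at t0 within {0..})"
    using S0 by (intro tendsto_mult_right_zero tendsto_norm_zero) (simp add: g_def)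
  have "\<forall>\<^sub>F t in at t0 within {0..}. norm (blinfun_apply (S t) z - blinfun_apply (S t0) z)
      \<le> M * norm (g \<bar>t - t0\<bar>)"
    unfolding eventually_at by (intro exI[of _ 1]) (auto simp: dist_real_def intro: increment)
  then have "((\<lambda>t. blinfun_apply (S t) z - blinfun_apply (S t0) z) \<longlongrightarrow> 0) (at t0 within {0..})"
    using bound_to_0 by (rule Lim_null_comparison)
  then show "((\<lambda>t. blinfun_apply (S t) z) \<longlongrightarrow> blinfun_apply (S t0) z) (at t0 within {0..})"
    using tendsto_add[OF _ tendsto_const[of "blinfun_apply (S t0) z"]] by fastforce
qed

lemma continuous_on_blinfun_apply_bounded_family:
  fixes U :: "'c::topological_space \<Rightarrow> ('a::real_normed_vector \<Rightarrow>\<^sub>L 'b::real_normed_vector)"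
  assumes strong: "\<And>z. continuous_on K (\<lambda>s. blinfun_apply (U s) z)"
    and bounded: "\<forall>s\<in>K. norm (U s) \<le> M"
    and w: "continuous_on K w"
  shows "continuous_on K (\<lambda>s. blinfun_apply (U s) (w s))"
  unfolding continuous_on_def
proof
  fix s0 assume s0: "s0 \<in> K"
  have "\<forall>\<^sub>F s in at s0 within K.
      norm (blinfun_apply (U s) (w s) - blinfun_apply (U s) (w s0)) \<le> M * norm (w s - w s0)"
    unfolding eventually_at_filter
  proof (intro always_eventually allI impI)
    fix s assume "s \<in> K"
    then have "norm (blinfun_apply (U s) (w s - w s0)) \<le> M * norm (w s - w s0)"
      using bounded by (intro order_trans[OF norm_blinfun] mult_right_mono) auto
    then show "norm (blinfun_apply (U s) (w s) - blinfun_apply (U s) (w s0)) \<le> M * norm (w s - w s0)"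
      by (simp add: blinfun.diff_right)
  qed
  moreover have "((\<lambda>s. M * norm (w s - w s0)) \<longlongrightarrow> 0) (at s0 within K)"
    using w s0 unfolding continuous_on_def
    by (intro tendsto_mult_right_zero tendsto_norm_zero) (simp add: Lim_null[symmetric])
  ultimately have "((\<lambda>s. blinfun_apply (U s) (w s) - blinfun_apply (U s) (w s0)) \<longlongrightarrow> 0) (at s0 within K)"
    by (rule Lim_null_comparison)
  moreover have "((\<lambda>s. blinfun_apply (U s) (w s0)) \<longlongrightarrow> blinfun_apply (U s0) (w s0)) (at s0 within K)"
    using strong s0 unfolding continuous_on_def by blast
  ultimately show "((\<lambda>s. blinfun_apply (U s) (w s)) \<longlongrightarrow> blinfun_apply (U s0) (w s0)) (at s0 within K)"
    using tendsto_add by fastforce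
qed

lemma C0_semigroup_convolution_integrable:
  fixes S :: "real \<Rightarrow> ('a::banach \<Rightarrow>\<^sub>L 'a)"
  assumes C0: "C0_semigroup S" and w: "continuous_on {0..t} w"
  shows "(\<lambda>s. blinfun_apply (S (t - s)) (w s)) integrable_on {0..t}"
proof -
  obtain M where M: "\<forall>r\<in>{0..t}. norm (S r) \<le> M"
    using C0_semigroup_bounded_on_interval[OF C0] by blast
  have "continuous_on {0..t} (\<lambda>s. blinfun_apply (S (t - s)) z)" for z
    by (rule continuous_on_compose2[OF C0_semigroup_strongly_continuous[OF C0]])
      (auto intro!: continuous_intros)
  moreover have "\<forall>s\<in>{0..t}. norm (S (t - s)) \<le> M" using M by auto
  ultimately show ?thesis
    by (intro integrable_continuous_interval continuous_on_blinfun_apply_bounded_family[OF _ _ w])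
qed

lemma N1_fixed_point_mild:
  fixes S :: "real \<Rightarrow> ('a::banach \<Rightarrow>\<^sub>L 'a)"
  assumes S0: "S 0 = id_blinfun"
    and fixed_0: "x 0 = N1 S F G T a b k x y 0" and fixed_t: "x t = N1 S F G T a b k x y t"
  shows "x t = blinfun_apply (S t) (x 0) + integral {0..t} (\<lambda>s. blinfun_apply (S (t - s)) (F (x s, y s)))"
proof -
  have "x t = blinfun_apply (S t) (N1 S F G T a b k x y 0)
      + integral {0..t} (\<lambda>s. blinfun_apply (S (t - s)) (F (x s, y s)))"
    using fixed_t by (simp add: N1_def S0 blinfun.scaleR_right)
  then show ?thesis by (simp only: fixed_0[symmetric])
qed

lemma N2_fixed_point_mild:
  fixes S :: "real \<Rightarrow> ('a::banach \<Rightarrow>\<^sub>L 'a)"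
  assumes S0: "S 0 = id_blinfun"
    and fixed_0: "y 0 = N2 S F G T a b k x y 0" and fixed_t: "y t = N2 S F G T a b k x y t"
  shows "y t = blinfun_apply (S t) (y 0) + integral {0..t} (\<lambda>s. blinfun_apply (S (t - s)) (G (x s, y s)))"
proof -
  have "y t = blinfun_apply (S t) (N2 S F G T a b k x y 0)
      + integral {0..t} (\<lambda>s. blinfun_apply (S (t - s)) (G (x s, y s)))"
    using fixed_t by (simp add: N2_def S0 blinfun.scaleR_right)
  then show ?thesis by (simp only: fixed_0[symmetric])
qed

lemma N1_fixed_point_boundary_condition:
  fixes S :: "real \<Rightarrow> ('a::banach \<Rightarrow>\<^sub>L 'a)"
  assumes C0: "C0_semigroup S" and "a \<noteq> 0"
    and F: "continuous_on {0..T} (\<lambda>s. F (x s, y s))" and G: "continuous_on {0..T} (\<lambda>s. G (x s, y s))"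
    and fixed_0: "x 0 = N1 S F G T a b k x y 0"
    and mild_x: "x T = blinfun_apply (S T) (x 0) + integral {0..T} (\<lambda>s. blinfun_apply (S (T - s)) (F (x s, y s)))"
    and mild_y: "y T = blinfun_apply (S T) (y 0) + integral {0..T} (\<lambda>s. blinfun_apply (S (T - s)) (G (x s, y s)))"
  shows "x T - a *\<^sub>R x 0 = k *\<^sub>R (y T - b *\<^sub>R y 0)"
proof -
  define JF where "JF = integral {0..T} (\<lambda>s. blinfun_apply (S (T - s)) (F (x s, y s)))"
  define JG where "JG = integral {0..T} (\<lambda>s. blinfun_apply (S (T - s)) (G (x s, y s)))"
  have S0: "S 0 = id_blinfun" using C0 unfolding C0_semigroup_def by simp
  have "integral {0..T} (\<lambda>s. blinfun_apply (S (T - s)) (F (x s, y s) - k *\<^sub>R G (x s, y s))) = JF - k *\<^sub>R JG"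
    using C0_semigroup_convolution_integrable[OF C0 F] C0_semigroup_convolution_integrable[OF C0 G]
    by (simp add: JF_def JG_def blinfun.diff_right blinfun.scaleR_right integral_diff integrable_cmul)
  then have "a *\<^sub>R N1 S F G T a b k x y 0
      = blinfun_apply (S T) (x 0) - k *\<^sub>R blinfun_apply (S T) (y 0) + (k * b) *\<^sub>R y 0 + (JF - k *\<^sub>R JG)"
    using \<open>a \<noteq> 0\<close> by (simp add: N1_def S0)
  then have "a *\<^sub>R x 0
      = blinfun_apply (S T) (x 0) - k *\<^sub>R blinfun_apply (S T) (y 0) + (k * b) *\<^sub>R y 0 + (JF - k *\<^sub>R JG)"
    by (simp only: fixed_0[symmetric])
  then show ?thesis
    unfolding mild_x mild_y JF_def[symmetric] JG_def[symmetric] by (simp add: algebra_simps)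
qed

theorem mainTheorem1:
  fixes S :: "real \<Rightarrow> ('a::banach \<Rightarrow>\<^sub>L 'a)"
    and A :: "'a \<Rightarrow> 'a" and D :: "'a set"
    and F G :: "'a \<times> 'a \<Rightarrow> 'a"
    and T a b k :: real
    and x y :: "real \<Rightarrow> 'a"
  assumes "T > 0"
    and "C0_semigroup S"
    and "sg_generator S A D"
    and "a > 0" and "b > 0" and "k > 0"
    and "continuous_on UNIV F" and "continuous_on UNIV G"
    and "continuous_on {0..T} x" and "continuous_on {0..T} y"
    and "\<forall>t\<in>{0..T}. x t = N1 S F G T a b k x y t"
    and "\<forall>t\<in>{0..T}. y t = N2 S F G T a b k x y t"
  shows "(\<forall>t\<in>{0..T}.
            x t = blinfun_apply (S t) (x 0) + integral {0..t} (\<lambda>s. blinfun_apply (S (t - s)) (F (x s, y s))) \<and>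
            y t = blinfun_apply (S t) (y 0) + integral {0..t} (\<lambda>s. blinfun_apply (S (t - s)) (G (x s, y s))))
         \<and> x T - a *\<^sub>R x 0 = k *\<^sub>R (y T - b *\<^sub>R y 0)"
proof -
  note C0 = assms(2) and fixed_x = assms(11) and fixed_y = assms(12)
  have S0: "S 0 = id_blinfun" using C0 unfolding C0_semigroup_def by simp
  have "0 \<in> {0..T}" "T \<in> {0..T}" using \<open>T > 0\<close> by auto
  note fixed_0 = fixed_x[rule_format, OF this(1)] fixed_y[rule_format, OF this(1)]
  have mild_x: "x t = blinfun_apply (S t) (x 0) + integral {0..t} (\<lambda>s. blinfun_apply (S (t - s)) (F (x s, y s)))"
    and mild_y: "y t = blinfun_apply (S t) (y 0) + integral {0..t} (\<lambda>s. blinfun_apply (S (t - s)) (G (x s, y s)))"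
    if "t \<in> {0..T}" for t
    using N1_fixed_point_mild[OF S0 fixed_0(1)] N2_fixed_point_mild[OF S0 fixed_0(2)]
      fixed_x fixed_y that by blast+
  have xy: "continuous_on {0..T} (\<lambda>s. (x s, y s))"
    using assms(9,10) by (rule continuous_on_Pair)
  have "x T - a *\<^sub>R x 0 = k *\<^sub>R (y T - b *\<^sub>R y 0)"
    using \<open>a > 0\<close> \<open>T \<in> {0..T}\<close>
    by (intro N1_fixed_point_boundary_condition[OF C0 _ _ _ fixed_0(1)] mild_x mild_y
        continuous_on_compose2[OF assms(7) xy] continuous_on_compose2[OF assms(8) xy]) auto
  with mild_x mild_y show ?thesis by blast
qed

end
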